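(* Let $Y$ be a relation variable of type $\{(\mathtt n,\mathtt n)\}$ and $U$ a function variable of type $\emptyset\to\mathtt n$. Then there are an arithmetical $\mathsf{FO{+}C}$-formula $\mathrm{s\text{-}itadd}$ and an arithmetical $\mathsf{FO{+}C}$-term $\mathrm{bd\text{-}s\text{-}itadd}$ (both possibly using $Y$ and $U$) such that for all numerical assignments $\mathfrak a$, $$\Big\langle \mathrm{s\text{-}itadd},\mathrm{bd\text{-}s\text{-}itadd}\Big\rangle^{\mathfrak a}=\sum_{i<\mathfrak a(U)}\langle Y,U\rangle^{\mathfrak a}(i).$$
   Context: $\mathsf{FO{+}C}$ is two-sorted first-order logic with counting: vertex variables range over the universe of a finite structure, number variables over $\mathbb N$. Terms: number variables, $0$, $1$, $\theta+\theta'$, $\theta\cdot\theta'$, terms $U(\xi_1,\dots,\xi_k)$ for function variables $U$, and counting terms $\#(x_1,\dots,x_k,y_1<\theta_1,\dots,y_\ell<\theta_\ell).\varphi$ (value: the number of tuples $(a_1..a_k,b_1..b_\ell)$, $a_i$ vertices, $b_i\in\mathbb N$, with each $b_i$ below the value of $\theta_i$ under the assignment extended by $x\mapsto a$, $y_1..y_{i-1}\mapsto b_1..b_{i-1}$, satisfying $\varphi$ under the assignment extended by all of them). Formulas: $\theta\le\theta'$, $x=x'$, relational atoms, atoms $X(\xi_1,\dots,\xi_k)$ for relation variables $X$, $\neg$, $\wedge$. Relation and function variables have types: a relation variable of type $\{(t_1,\dots,t_k)\}$ ($t_i\in\{\mathtt v,\mathtt n\}$) is interpreted by a subset of the corresponding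 product of universe/$\mathbb N$; a function variable of type $(t_1..t_k)\to\mathtt n$ by a function from that product to $\mathbb N$; in atoms $X(\xi_1..\xi_k)$ and terms $U(\xi_1..\xi_k)$, $\xi_i$ is a vertex variable if $t_i=\mathtt v$ and a term if $t_i=\mathtt n$. There is no quantification over relation/function variables. An expression is arithmetical if it contains no vertex variables; its value then depends only on a numerical assignment $\mathfrak a$ (values of number variables and of relation/function variables of purely numerical type). For a $0$-ary function variable write $\mathfrak a(U)$ for its value. Notation: $\langle Y,U\rangle^{\mathfrak a}(i)=\sum\{2^j: (j,i)\in\mathfrak a(Y),\ j<\mathfrak a(U)\}$. For a fixed distinguished number variable $\hat y$, a formula $\chi$ and a term $\theta$, $\langle\chi,\theta\rangle^{\mathfrak a}=\sum\{2^i: i<\text{value of }\theta\text{ under }\mathfrak a,\ \chi\text{ holds under }\mathfrak a\text{ modified to }\hat y\mapsto i\}$. *)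

theory Defs
  imports Main
begin

text \<open>Deep embedding of arithmetical FO+C expressions (no vertex variables) whose only
relation/function variables are Y of type {(n,n)} and the 0-ary function variable U.\<close>

datatype aterm =
    NVar nat
  | Zero
  | One
  | Plus aterm aterm
  | Times aterm aterm
  | UTerm
  | Count "(nat \<times> aterm) list" aform
and aform =
    Le aterm aterm
  | YAtom aterm aterm
  | Neg aform
  | Conj aform aform

text \<open>A counting term
#(y1<t1,...,yl<tl).phi counts tuples (b1..bl) with bi below the value of ti under the
assignment extended by y1..y(i-1) := b1..b(i-1), satisfying phi.\<close>

function (sequential) evalt :: "(nat \<Rightarrow> nat) \<Rightarrow> (nat \<Rightarrow> nat \<Rightarrow> bool) \<Rightarrow> nat \<Rightarrow> aterm \<Rightarrow> nat"
and holds :: "(nat \<Rightarrow> nat) \<Rightarrow> (nat \<Rightarrow> nat \<Rightarrow> bool) \<Rightarrow> nat \<Rightarrow> aform \<Rightarrow> bool"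
and cnt :: "(nat \<Rightarrow> nat) \<Rightarrow> (nat \<Rightarrow> nat \<Rightarrow> bool) \<Rightarrow> nat \<Rightarrow> (nat \<times> aterm) list \<Rightarrow> aform \<Rightarrow> nat"
where
  "evalt nv Y u (NVar x) = nv x"
| "evalt nv Y u Zero = 0"
| "evalt nv Y u One = 1"
| "evalt nv Y u (Plus s t) = evalt nv Y u s + evalt nv Y u t"
| "evalt nv Y u (Times s t) = evalt nv Y u s * evalt nv Y u t"
| "evalt nv Y u UTerm = u"
| "evalt nv Y u (Count ys \<phi>) = cnt nv Y u ys \<phi>"
| "holds nv Y u (Le s t) = (evalt nv Y u s \<le> evalt nv Y u t)"
| "holds nv Y u (YAtom s t) = Y (evalt nv Y u s) (evalt nv Y u t)"
| "holds nv Y u (Neg \<phi>) = (\<not> holds nv Y u \<phi>)"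
| "holds nv Y u (Conj \<phi> \<psi>) = (holds nv Y u \<phi> \<and> holds nv Y u \<psi>)"
| "cnt nv Y u [] \<phi> = (if holds nv Y u \<phi> then 1 else 0)"
| "cnt nv Y u ((y, t) # ys) \<phi> = (\<Sum>b < evalt nv Y u t. cnt (nv(y := b)) Y u ys \<phi>)"
  by pat_completeness auto
termination by size_change

definition yhat :: nat where "yhat = 0"

definition bitval :: "(nat \<Rightarrow> nat) \<Rightarrow> (nat \<Rightarrow> nat \<Rightarrow> bool) \<Rightarrow> nat \<Rightarrow> aform \<Rightarrow> aterm \<Rightarrow> nat" where
  "bitval nv Y u \<chi> \<theta> = (\<Sum>i | i < evalt nv Y u \<theta> \<and> holds (nv(yhat := i)) Y u \<chi>. 2 ^ i)"

text \<open>\<langle>Y,U\<rangle>^a(i), with (j,i) in Y read as Y j i.\<close>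
definition YU :: "(nat \<Rightarrow> nat \<Rightarrow> bool) \<Rightarrow> nat \<Rightarrow> nat \<Rightarrow> nat" where
  "YU Y u i = (\<Sum>j | Y j i \<and> j < u. 2 ^ j)"

end

theory Submission
  imports Defs
begin

(* FO+C terms only take values polynomial in u, while S = sum of YU Y u i over i < u, which is
   the sum of c_j 2^j over j < u (c_j = number of summands with bit j set), has about 2u bits;
   so S is defined bit by bit. Take W = 2^L with u < W <= 2u and cut S into base-W digits.
   The block sums s_B = sum of c_(BL+r) 2^r over r < L are below W^2 and are counting terms.
   Merging the low half of s_B with the high half of s_(B-1) gives v_B < 2W - 1 with
   S = sum of v_B W^B, so every carry is 0 or 1, and carry lookahead makes it first-order:
   there is a carry into block B iff some lower block generates one (v_b >= W) and every
   block in between propagates it (v_b' >= W - 1). Bit k of S is bit (k mod L) of the digit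
   (v_B + carry) mod W with B = k div L, and bits below 2u suffice because S < 2^(2u). *)

lemma ex_divmod_iff:
  fixes x W :: nat
  assumes "0 < W" "x div W < Q"
  shows "(\<exists>q<Q. \<exists>r<W. x = q * W + r \<and> P q r) \<longleftrightarrow> P (x div W) (x mod W)"
proof
  assume "\<exists>q<Q. \<exists>r<W. x = q * W + r \<and> P q r"
  then obtain q r where "r < W" "x = q * W + r" "P q r" by blast
  then show "P (x div W) (x mod W)" by simp
next
  assume "P (x div W) (x mod W)"
  then show "\<exists>q<Q. \<exists>r<W. x = q * W + r \<and> P q r"
    using assms by (metis div_mult_mod_eq mod_less_divisor)
qed

lemma odd_iff_bounded: "(\<exists>h<q. Suc (h + h) = q) \<longleftrightarrow> odd (q::nat)"
  by (auto elim!: oddE intro!: exI[of _ "q div 2"])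

lemma eq_mod_iff_below_double:
  fixes x W :: nat
  assumes "x < W + W"
  shows "r < W \<and> (x = r \<or> x = r + W) \<longleftrightarrow> r = x mod W"
  using assms by (cases "x < W") (auto simp: le_mod_geq)

lemma pow2_iff_even_divisors:
  "(\<exists>i. n = (2::nat) ^ i) \<longleftrightarrow> 0 < n \<and> (\<forall>d. d dvd n \<and> 1 < d \<longrightarrow> even d)"
proof
  assume "\<exists>i. n = 2 ^ i"
  then obtain i where n: "n = 2 ^ i" ..
  have "even d" if "d dvd n" "1 < d" for d
  proof (rule ccontr)
    assume "odd d"
    then have "coprime d n"
      unfolding n by (simp add: coprime_left_2_iff_odd)
    with \<open>d dvd n\<close> have "d = 1"
      using coprime_dvd_mult_right_iff by fastforce
    with \<open>1 < d\<close> show False by simp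
  qed
  then show "0 < n \<and> (\<forall>d. d dvd n \<and> 1 < d \<longrightarrow> even d)"
    using n by simp
next
  show "0 < n \<and> (\<forall>d. d dvd n \<and> 1 < d \<longrightarrow> even d) \<Longrightarrow> \<exists>i. n = 2 ^ i"
  proof (induction n rule: less_induct)
    case (less n)
    show ?case
    proof (cases "n = 1")
      case True
      then show ?thesis by (metis power_0)
    next
      case False
      with less.prems have "even n" by auto
      then obtain h where h: "n = 2 * h" ..
      with less.prems have "0 < h \<and> (\<forall>d. d dvd h \<and> 1 < d \<longrightarrow> even d)"
        by (auto intro: dvd_mult2)
      with less.IH[of h] h obtain i where "h = 2 ^ i" by auto
      with h show ?thesis by (metis power_Suc)
    qed
  qed
qed

lemma card_pow2_below: "card {q. q < 2 ^ i \<and> (\<exists>j. q = (2::nat) ^ j)} = i"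
proof -
  have "{q. q < 2 ^ i \<and> (\<exists>j. q = (2::nat) ^ j)} = (\<lambda>j. 2 ^ j) ` {..<i}"
    by auto
  then show ?thesis
    by (simp add: card_image inj_on_def)
qed

lemma ex_pow2_above_below_double:
  assumes "0 < (u::nat)"
  shows "\<exists>L. u < 2 ^ L \<and> 2 ^ L \<le> u + u"
proof -
  obtain n where "2 ^ n \<le> u" "u < 2 ^ Suc n"
    using ex_power_ivl1[of 2 u] assms by auto
  then show ?thesis
    by (intro exI[of _ "Suc n"]) simp
qed

lemma sum_digits_le:
  assumes "\<And>r. r < L \<Longrightarrow> a r \<le> m"
  shows "(\<Sum>r<L. a r * 2 ^ r) + m \<le> m * (2::nat) ^ L"
  using assms
proof (induction L)
  case (Suc L)
  then have "(\<Sum>r<L. a r * 2 ^ r) + m \<le> m * 2 ^ L" "a L * 2 ^ L \<le> m * 2 ^ L"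
    by simp_all
  moreover have "m * 2 ^ Suc L = m * 2 ^ L + m * 2 ^ L"
    by simp
  ultimately show ?case
    by (simp only: sum.lessThan_Suc)
qed simp

lemma sum_set_bits:
  fixes n :: nat
  assumes "n < 2 ^ m"
  shows "(\<Sum>i | i < m \<and> bit n i. 2 ^ i) = n"
proof -
  have "(\<Sum>i | i < m \<and> bit n i. (2::nat) ^ i) = (\<Sum>i<m. of_bool (bit n i) * 2 ^ i)"
    by (simp add: sum.If_cases Int_def conj_commute)
  also have "\<dots> = take_bit m n"
    by (simp add: take_bit_sum push_bit_eq_mult atLeast0LessThan mult.commute)
  finally show ?thesis
    using assms by (simp add: take_bit_nat_eq_self)
qed

lemma bit_block_digit_iff:
  fixes n :: nat
  assumes "r < L"
  shows "bit (n div (2 ^ L) ^ B mod 2 ^ L) r \<longleftrightarrow> bit n (B * L + r)"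
proof -
  have "(2 ^ L) ^ B = (2::nat) ^ (B * L)"
    by (metis power_mult mult.commute)
  then have "n div (2 ^ L) ^ B mod 2 ^ L = take_bit L (drop_bit (B * L) n)"
    by (simp add: take_bit_eq_mod drop_bit_eq_div)
  then show ?thesis
    using assms by (simp add: bit_take_bit_iff bit_drop_bit_eq add.commute)
qed

definition carry :: "(nat \<Rightarrow> nat) \<Rightarrow> nat \<Rightarrow> nat \<Rightarrow> nat" where
  "carry v W B = (\<Sum>b<B. v b * W ^ b) div W ^ B"

lemma carry_Suc:
  assumes "0 < W"
  shows "carry v W (Suc B) = (v B + carry v W B) div W"
proof -
  have "(\<Sum>b<Suc B. v b * W ^ b) div W ^ B = v B + carry v W B"
    using assms by (simp add: carry_def)
  then show ?thesis
    unfolding carry_def power_Suc2 div_mult2_eq by simp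
qed

lemma digit_sum_eq_carry:
  assumes "0 < W" "B < K"
  shows "(\<Sum>b<K. v b * W ^ b) div W ^ B mod W = (v B + carry v W B) mod W"
proof -
  have "W ^ Suc B dvd (\<Sum>b\<in>{Suc B..<K}. v b * W ^ b)"
    by (intro dvd_sum dvd_mult le_imp_power_dvd) auto
  then obtain R where R: "(\<Sum>b\<in>{Suc B..<K}. v b * W ^ b) = W ^ Suc B * R" ..
  have "(\<Sum>b<K. v b * W ^ b) = (\<Sum>b<Suc B. v b * W ^ b) + (\<Sum>b\<in>{Suc B..<K}. v b * W ^ b)"
    using assms(2) by (metis Suc_leI lessThan_atLeast0 sum.atLeastLessThan_concat zero_le)
  then have "(\<Sum>b<K. v b * W ^ b) = (\<Sum>b<Suc B. v b * W ^ b) + W ^ B * (W * R)"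
    by (simp add: R mult.assoc)
  then have "(\<Sum>b<K. v b * W ^ b) div W ^ B = v B + carry v W B + W * R"
    using assms(1) by (simp add: carry_def)
  then show ?thesis
    by simp
qed

definition carry_in :: "(nat \<Rightarrow> nat) \<Rightarrow> nat \<Rightarrow> nat \<Rightarrow> bool" where
  "carry_in v W B \<longleftrightarrow> (\<exists>b<B. W \<le> v b \<and> (\<forall>b'<B. b < b' \<longrightarrow> W \<le> v b' + 1))"

lemma carry_in_Suc:
  "carry_in v W (Suc B) \<longleftrightarrow> W \<le> v B \<or> carry_in v W B \<and> W \<le> v B + 1"
proof
  assume "carry_in v W (Suc B)"
  then obtain b where b: "b < Suc B" "W \<le> v b" "\<forall>b'<Suc B. b < b' \<longrightarrow> W \<le> v b' + 1"
    unfolding carry_in_def by blast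
  show "W \<le> v B \<or> carry_in v W B \<and> W \<le> v B + 1"
  proof (cases "b = B")
    case False
    with b show ?thesis
      unfolding carry_in_def by (auto simp: less_Suc_eq)
  qed (use b in simp)
next
  assume "W \<le> v B \<or> carry_in v W B \<and> W \<le> v B + 1"
  then show "carry_in v W (Suc B)"
    unfolding carry_in_def by (auto simp: less_Suc_eq)
qed

lemma carry_eq_carry_in:
  assumes "0 < W" "\<And>b. v b + 1 < W + W"
  shows "carry v W B = of_bool (carry_in v W B)"
proof (induction B)
  case 0
  then show ?case by (simp add: carry_def carry_in_def)
next
  case (Suc B)
  have "v B + carry v W B < W + W"
    using assms(2)[of B] Suc.IH by auto
  then have "(v B + carry v W B) div W = of_bool (W \<le> v B + carry v W B)"
    using assms(1) by (auto simp: div_nat_eqI)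
  then show ?case
    using Suc.IH by (auto simp: carry_Suc[OF assms(1)] carry_in_Suc)
qed

definition merge_halves :: "(nat \<Rightarrow> nat) \<Rightarrow> nat \<Rightarrow> nat \<Rightarrow> nat" where
  "merge_halves s W B = s B mod W + (if B = 0 then 0 else s (B - 1) div W)"

lemma sum_merge_halves:
  assumes "s K = 0"
  shows "(\<Sum>b<Suc K. merge_halves s W b * W ^ b) = (\<Sum>b<K. s b * W ^ b)"
proof -
  have "(\<Sum>b<Suc K. (if b = 0 then 0 else s (b - 1) div W) * W ^ b)
      = (\<Sum>b<K. s b div W * W ^ Suc b)"
    by (subst sum.lessThan_Suc_shift) simp
  then have "(\<Sum>b<Suc K. merge_halves s W b * W ^ b)
      = (\<Sum>b<Suc K. s b mod W * W ^ b) + (\<Sum>b<K. s b div W * W ^ Suc b)"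
    by (simp only: merge_halves_def distrib_right sum.distrib)
  also have "\<dots> = (\<Sum>b<K. s b mod W * W ^ b + s b div W * W ^ Suc b)"
    using assms by (simp add: sum.distrib)
  also have "\<dots> = (\<Sum>b<K. s b * W ^ b)"
    by (rule sum.cong[OF refl]) (metis add_mult_distrib mod_div_mult_eq mult.assoc power_Suc)
  finally show ?thesis .
qed

lemma merge_halves_less:
  assumes "\<And>b. s b < W * W"
  shows "merge_halves s W B + 1 < W + W"
proof -
  have "0 < W"
    using assms[of 0] by (metis mult_0 not_less_zero neq0_conv)
  then have "s B mod W < W" "(if B = 0 then 0 else s (B - 1) div W) < W"
    using assms by (simp_all add: less_mult_imp_div_less)
  then show ?thesis
    unfolding merge_halves_def by linarith
qed

definition lookahead_digit :: "(nat \<Rightarrow> nat) \<Rightarrow> nat \<Rightarrow> nat \<Rightarrow> nat" where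
  "lookahead_digit s W B =
     (merge_halves s W B + of_bool (carry_in (merge_halves s W) W B)) mod W"

lemma lookahead_digit_less: "0 < W \<Longrightarrow> lookahead_digit s W B < W"
  by (simp add: lookahead_digit_def)

lemma digit_eq_lookahead_digit:
  assumes s_less: "\<And>b. s b < W * W" and s_zero: "\<And>b. K \<le> b \<Longrightarrow> s b = 0"
  shows "(\<Sum>b<K. s b * W ^ b) div W ^ B mod W = lookahead_digit s W B"
proof -
  have "0 < W"
    using s_less[of 0] by (metis mult_0 not_less_zero neq0_conv)
  have "(\<Sum>b<K. s b * W ^ b) = (\<Sum>b<K + B. s b * W ^ b)"
    by (rule sum.mono_neutral_left) (auto simp: s_zero)
  also have "\<dots> = (\<Sum>b<Suc (K + B). merge_halves s W b * W ^ b)"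
    by (rule sum_merge_halves[symmetric]) (simp add: s_zero)
  finally have "(\<Sum>b<K. s b * W ^ b) div W ^ B mod W
      = (merge_halves s W B + carry (merge_halves s W) W B) mod W"
    using digit_sum_eq_carry[OF \<open>0 < W\<close>, of B "Suc (K + B)"] by simp
  then show ?thesis
    unfolding lookahead_digit_def
    using carry_eq_carry_in[OF \<open>0 < W\<close> merge_halves_less[OF s_less]] by simp
qed

definition bit_count :: "(nat \<Rightarrow> nat \<Rightarrow> bool) \<Rightarrow> nat \<Rightarrow> nat \<Rightarrow> nat" where
  "bit_count Y u j = (if j < u then card {i. i < u \<and> Y j i} else 0)"

lemma bit_count_le: "bit_count Y u j \<le> u"
  unfolding bit_count_def by (auto intro: card_mono[of "{..<u}", simplified])

lemma sum_YU_eq_bit_counts: "(\<Sum>i<u. YU Y u i) = (\<Sum>j<u. bit_count Y u j * 2 ^ j)"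
proof -
  have "(\<Sum>i<u. YU Y u i) = (\<Sum>i<u. \<Sum>j<u. if Y j i then 2 ^ j else 0)"
    unfolding YU_def by (simp add: sum.If_cases Int_def conj_commute)
  also have "\<dots> = (\<Sum>j<u. \<Sum>i<u. if Y j i then 2 ^ j else 0)"
    by (rule sum.swap)
  also have "\<dots> = (\<Sum>j<u. bit_count Y u j * 2 ^ j)"
    by (simp add: sum.If_cases bit_count_def Int_def conj_commute)
  finally show ?thesis .
qed

lemma sum_YU_less: "(\<Sum>i<u. YU Y u i) < 2 ^ (u + u)"
proof -
  have "(\<Sum>j<u. bit_count Y u j * 2 ^ j) + u \<le> u * 2 ^ u"
    by (rule sum_digits_le) (rule bit_count_le)
  also have "\<dots> < 2 ^ u * 2 ^ u"
    by simp
  finally show ?thesis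
    by (simp add: sum_YU_eq_bit_counts power_add)
qed

definition block_sum :: "(nat \<Rightarrow> nat \<Rightarrow> bool) \<Rightarrow> nat \<Rightarrow> nat \<Rightarrow> nat \<Rightarrow> nat" where
  "block_sum Y u L B = (\<Sum>r<L. bit_count Y u (B * L + r) * 2 ^ r)"

lemma block_sum_less:
  assumes "u < 2 ^ L"
  shows "block_sum Y u L B < 2 ^ L * 2 ^ L"
proof -
  have "block_sum Y u L B + u \<le> u * 2 ^ L"
    unfolding block_sum_def by (rule sum_digits_le) (rule bit_count_le)
  also have "\<dots> < 2 ^ L * 2 ^ L"
    using assms by simp
  finally show ?thesis
    by simp
qed

lemma block_sum_div_less:
  "u < 2 ^ L \<Longrightarrow> block_sum Y u L B div 2 ^ L < 2 ^ L"
  using block_sum_less by (simp add: less_mult_imp_div_less)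

lemma block_sum_eq_0:
  assumes "u \<le> B * L"
  shows "block_sum Y u L B = 0"
  using assms by (simp add: block_sum_def bit_count_def)

lemma sum_YU_eq_block_sums:
  assumes "u \<le> K * L"
  shows "(\<Sum>i<u. YU Y u i) = (\<Sum>B<K. block_sum Y u L B * (2 ^ L) ^ B)"
proof -
  have "block_sum Y u L B * (2 ^ L) ^ B = (\<Sum>j\<in>{B * L..<B * L + L}. bit_count Y u j * 2 ^ j)" for B
  proof -
    have "(\<Sum>j\<in>{B * L..<B * L + L}. bit_count Y u j * 2 ^ j)
        = (\<Sum>r<L. bit_count Y u (B * L + r) * 2 ^ (B * L + r))"
      using sum.shift_bounds_nat_ivl[of _ 0 "B * L" L] by (simp add: atLeast0LessThan add.commute)
    moreover have "(2 ^ L) ^ B = (2::nat) ^ (B * L)"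
      by (metis power_mult mult.commute)
    ultimately show ?thesis
      unfolding block_sum_def sum_distrib_right by (simp add: power_add mult_ac)
  qed
  then have "(\<Sum>B<K. block_sum Y u L B * (2 ^ L) ^ B) = (\<Sum>j<K * L. bit_count Y u j * 2 ^ j)"
    by (simp add: sum.nat_group)
  also have "\<dots> = (\<Sum>j<u. bit_count Y u j * 2 ^ j)"
    using assms by (intro sum.mono_neutral_right) (auto simp: bit_count_def)
  finally show ?thesis
    by (simp add: sum_YU_eq_bit_counts)
qed

lemma merge_halves_block_sum_less:
  "u < 2 ^ L \<Longrightarrow> merge_halves (block_sum Y u L) (2 ^ L) B < 2 ^ L + 2 ^ L"
  using merge_halves_less[of "block_sum Y u L" "2 ^ L" B] block_sum_less by fastforce

lemma bit_sum_YU_iff: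
  assumes "0 < L" "u < 2 ^ L"
  shows "bit (\<Sum>i<u. YU Y u i) k \<longleftrightarrow>
    bit (lookahead_digit (block_sum Y u L) (2 ^ L) (k div L)) (k mod L)"
proof -
  have "u \<le> u * L"
    using assms(1) by simp
  then have "(\<Sum>i<u. YU Y u i) = (\<Sum>B<u. block_sum Y u L B * (2 ^ L) ^ B)"
    by (rule sum_YU_eq_block_sums)
  then have "(\<Sum>i<u. YU Y u i) div (2 ^ L) ^ B mod 2 ^ L
      = lookahead_digit (block_sum Y u L) (2 ^ L) B" for B
    using \<open>u \<le> u * L\<close>
    by (auto intro!: digit_eq_lookahead_digit block_sum_less[OF assms(2)] block_sum_eq_0
        intro: le_trans mult_le_mono1)
  moreover have "k = k div L * L + k mod L"
    by simp
  ultimately show ?thesis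
    using bit_block_digit_iff[of "k mod L" L "\<Sum>i<u. YU Y u i" "k div L"] assms(1) by simp
qed

definition LessF :: "aterm \<Rightarrow> aterm \<Rightarrow> aform" where
  "LessF s t = Neg (Le t s)"

definition EqF :: "aterm \<Rightarrow> aterm \<Rightarrow> aform" where
  "EqF s t = Conj (Le s t) (Le t s)"

definition DisjF :: "aform \<Rightarrow> aform \<Rightarrow> aform" where
  "DisjF \<phi> \<psi> = Neg (Conj (Neg \<phi>) (Neg \<psi>))"

definition ImpF :: "aform \<Rightarrow> aform \<Rightarrow> aform" where
  "ImpF \<phi> \<psi> = Neg (Conj \<phi> (Neg \<psi>))"

definition ExBelow :: "nat \<Rightarrow> aterm \<Rightarrow> aform \<Rightarrow> aform" where
  "ExBelow x t \<phi> = LessF Zero (Count [(x, t)] \<phi>)"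

definition AllBelow :: "nat \<Rightarrow> aterm \<Rightarrow> aform \<Rightarrow> aform" where
  "AllBelow x t \<phi> = Neg (ExBelow x t (Neg \<phi>))"

definition Two :: aterm where
  "Two = Plus One One"

lemma evalt_Count_single:
  "evalt nv Y u (Count [(x, t)] \<phi>) = card {b. b < evalt nv Y u t \<and> holds (nv(x := b)) Y u \<phi>}"
  by (simp add: sum.If_cases Int_def conj_commute)

lemma card_bounded_pos_iff: "0 < card {b::nat. b < n \<and> P b} \<longleftrightarrow> (\<exists>b<n. P b)"
  by (auto simp: card_gt_0_iff)

lemma holds_connectives [simp]:
  "holds nv Y u (LessF s t) \<longleftrightarrow> evalt nv Y u s < evalt nv Y u t"
  "holds nv Y u (EqF s t) \<longleftrightarrow> evalt nv Y u s = evalt nv Y u t"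
  "holds nv Y u (DisjF \<phi> \<psi>) \<longleftrightarrow> holds nv Y u \<phi> \<or> holds nv Y u \<psi>"
  "holds nv Y u (ImpF \<phi> \<psi>) \<longleftrightarrow> (holds nv Y u \<phi> \<longrightarrow> holds nv Y u \<psi>)"
  "holds nv Y u (ExBelow x t \<phi>) \<longleftrightarrow> (\<exists>b < evalt nv Y u t. holds (nv(x := b)) Y u \<phi>)"
  "holds nv Y u (AllBelow x t \<phi>) \<longleftrightarrow> (\<forall>b < evalt nv Y u t. holds (nv(x := b)) Y u \<phi>)"
  "evalt nv Y u Two = 2"
  by (auto simp: LessF_def EqF_def DisjF_def ImpF_def ExBelow_def AllBelow_def Two_def
      evalt_Count_single card_bounded_pos_iff simp del: evalt.simps(7))

(* Number variables 0, 1, 2 hold the bit position (the distinguished variable), W = 2^L and L.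
   A constructor with base index c binds only variables c, c + 1, ..., so its arguments,
   which must be below c, stay free. *)

definition Pow2F :: "nat \<Rightarrow> nat \<Rightarrow> aform" where
  "Pow2F x c = Conj (LessF Zero (NVar x))
     (AllBelow c (Plus (NVar x) One) (AllBelow (c + 1) (Plus (NVar x) One)
       (ImpF (Conj (EqF (Times (NVar c) (NVar (c + 1))) (NVar x)) (LessF One (NVar c)))
             (ExBelow (c + 2) (NVar c) (EqF (Plus (NVar (c + 2)) (NVar (c + 2))) (NVar c))))))"

lemma holds_Pow2F [simp]:
  assumes "x < c"
  shows "holds nv Y u (Pow2F x c) \<longleftrightarrow> (\<exists>i. nv x = 2 ^ i)"
proof -
  have even_iff: "(\<exists>h<d. h + h = d) \<longleftrightarrow> even d" if "1 < d" for d :: nat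
    using that by (auto elim!: evenE intro!: exI[of _ "d div 2"])
  have "(\<forall>d<n + 1. \<forall>e<n + 1. d * e = n \<and> 1 < d \<longrightarrow> even d)
      \<longleftrightarrow> (\<forall>d. d dvd n \<and> 1 < d \<longrightarrow> even d)" if "0 < n" for n :: nat
  proof -
    have "d \<le> n \<and> e \<le> n" if "d * e = n" for d e
      using \<open>0 < n\<close> that by (metis dvd_imp_le dvd_triv_left dvd_triv_right)
    then show ?thesis
      by (auto elim!: dvdE) (metis less_Suc_eq_le dvd_triv_left)
  qed
  then show ?thesis
    unfolding Pow2F_def pow2_iff_even_divisors using assms by (auto simp: even_iff)
qed

(* p = 2^r iff p is a power of two and exactly r powers of two lie below p. *)

definition ExpF :: "nat \<Rightarrow> nat \<Rightarrow> nat \<Rightarrow> aform" where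
  "ExpF p r c = Conj (Pow2F p c) (EqF (Count [(c, NVar p)] (Pow2F c (c + 1))) (NVar r))"

lemma holds_ExpF [simp]:
  assumes "p < c" "r < c"
  shows "holds nv Y u (ExpF p r c) \<longleftrightarrow> nv p = 2 ^ nv r"
  using assms card_pow2_below by (auto simp: ExpF_def evalt_Count_single simp del: evalt.simps(7))

(* The witness 2^r is searched below n + 1: if 2^r > n there is none, and indeed bit n r fails. *)

definition BitF :: "nat \<Rightarrow> nat \<Rightarrow> nat \<Rightarrow> aform" where
  "BitF n r c = ExBelow c (Plus (NVar n) One) (Conj (ExpF c r (c + 1))
     (ExBelow (c + 1) (Plus (NVar n) One) (ExBelow (c + 2) (NVar c)
       (Conj (EqF (NVar n) (Plus (Times (NVar (c + 1)) (NVar c)) (NVar (c + 2))))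
             (ExBelow (c + 3) (NVar (c + 1))
               (EqF (Plus (Plus (NVar (c + 3)) (NVar (c + 3))) One) (NVar (c + 1))))))))"

lemma holds_BitF [simp]:
  assumes "n < c" "r < c"
  shows "holds nv Y u (BitF n r c) \<longleftrightarrow> bit (nv n) (nv r)"
proof -
  have "holds nv Y u (BitF n r c) \<longleftrightarrow> 2 ^ nv r \<le> nv n \<and>
      (\<exists>q<nv n + 1. \<exists>m<2 ^ nv r. nv n = q * 2 ^ nv r + m \<and> odd q)"
    using assms by (simp add: BitF_def odd_iff_bounded less_Suc_eq_le)
  also have "\<dots> \<longleftrightarrow> 2 ^ nv r \<le> nv n \<and> odd (nv n div 2 ^ nv r)"
    by (subst ex_divmod_iff) (simp_all add: le_imp_less_Suc div_le_dividend)
  also have "\<dots> \<longleftrightarrow> bit (nv n) (nv r)"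
    by (metis bit_iff_odd div_less even_zero not_le)
  finally show ?thesis .
qed

(* Counts triples (r, a, z) with Y (B L + r) a and z < 2^r, so bit r of summand a weighs 2^r. *)

definition BlockSumT :: "nat \<Rightarrow> nat \<Rightarrow> aterm" where
  "BlockSumT B c = Count [(c, NVar 2), (c + 1, UTerm), (c + 2, NVar 1)]
     (Conj (YAtom (Plus (Times (NVar B) (NVar 2)) (NVar c)) (NVar (c + 1)))
       (Conj (LessF (Plus (Times (NVar B) (NVar 2)) (NVar c)) UTerm)
         (ExBelow (c + 3) (Plus (NVar 1) One)
           (Conj (ExpF (c + 3) c (c + 4)) (LessF (NVar (c + 2)) (NVar (c + 3)))))))"

lemma evalt_BlockSumT [simp]:
  assumes "B < c" "2 < c" "nv 1 = 2 ^ nv 2"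
  shows "evalt nv Y u (BlockSumT B c) = block_sum Y u (nv 2) (nv B)"
proof -
  let ?L = "nv 2" and ?j = "\<lambda>r. nv B * nv 2 + r"
  have inner: "(\<Sum>z<(2::nat) ^ ?L. if Y (?j r) a \<and> ?j r < u \<and> 2 ^ r < Suc (2 ^ ?L) \<and> z < 2 ^ r then 1 else 0)
      = (if Y (?j r) a \<and> ?j r < u then 2 ^ r else 0 :: nat)" if "r < ?L" for r a
  proof -
    have "(2::nat) ^ r \<le> 2 ^ ?L"
      using that by simp
    then have "{z. z < 2 ^ ?L \<and> 2 ^ r < Suc (2 ^ ?L) \<and> z < 2 ^ r} = {..<(2::nat) ^ r}"
      by (auto simp del: power_increasing_iff)
    then show ?thesis
      by (auto simp: sum.If_cases Int_def)
  qed
  have "evalt nv Y u (BlockSumT B c) = (\<Sum>r<?L. \<Sum>a<u. \<Sum>z<(2::nat) ^ ?L.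
      if Y (?j r) a \<and> ?j r < u \<and> 2 ^ r < Suc (2 ^ ?L) \<and> z < 2 ^ r then 1 else 0)"
    using assms by (simp add: BlockSumT_def)
  also have "\<dots> = (\<Sum>r<?L. \<Sum>a<u. if Y (?j r) a \<and> ?j r < u then 2 ^ r else 0)"
    by (intro sum.cong refl inner) simp
  also have "\<dots> = block_sum Y u ?L (nv B)"
    by (auto simp: block_sum_def bit_count_def sum.If_cases Int_def conj_commute intro!: sum.cong)
  finally show ?thesis .
qed

definition MergeF :: "nat \<Rightarrow> nat \<Rightarrow> nat \<Rightarrow> aform" where
  "MergeF B v c = ExBelow c (NVar 1) (ExBelow (c + 1) (NVar 1)
     (Conj (EqF (BlockSumT B (c + 5)) (Plus (Times (NVar c) (NVar 1)) (NVar (c + 1))))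
       (DisjF (Conj (EqF (NVar B) Zero) (EqF (NVar v) (NVar (c + 1))))
         (ExBelow (c + 2) (NVar B) (Conj (EqF (Plus (NVar (c + 2)) One) (NVar B))
           (ExBelow (c + 3) (NVar 1) (ExBelow (c + 4) (NVar 1)
             (Conj (EqF (BlockSumT (c + 2) (c + 5))
                        (Plus (Times (NVar (c + 3)) (NVar 1)) (NVar (c + 4))))
                   (EqF (NVar v) (Plus (NVar (c + 1)) (NVar (c + 3))))))))))))"

lemma holds_MergeF [simp]:
  assumes "B < c" "v < c" "2 < c" "nv 1 = 2 ^ nv 2" "u < nv 1"
  shows "holds nv Y u (MergeF B v c) \<longleftrightarrow>
    nv v = merge_halves (block_sum Y u (nv 2)) (2 ^ nv 2) (nv B)"
proof -
  have pred: "(\<exists>b<n. Suc b = n \<and> P b) \<longleftrightarrow> 0 < n \<and> P (n - 1)" for n and P :: "nat \<Rightarrow> bool"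
    by (cases n) auto
  show ?thesis
    using assms by (simp add: MergeF_def ex_divmod_iff block_sum_div_less merge_halves_def pred)
qed

definition CarryF :: "nat \<Rightarrow> nat \<Rightarrow> aform" where
  "CarryF B c = ExBelow c (NVar B)
     (Conj (ExBelow (c + 1) (Plus (NVar 1) (NVar 1))
             (Conj (MergeF c (c + 1) (c + 4)) (Le (NVar 1) (NVar (c + 1)))))
       (AllBelow (c + 2) (NVar B) (ImpF (LessF (NVar c) (NVar (c + 2)))
         (ExBelow (c + 3) (Plus (NVar 1) (NVar 1))
           (Conj (MergeF (c + 2) (c + 3) (c + 4)) (Le (NVar 1) (Plus (NVar (c + 3)) One)))))))"

lemma holds_CarryF [simp]:
  assumes "B < c" "2 < c" "nv 1 = 2 ^ nv 2" "u < nv 1"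
  shows "holds nv Y u (CarryF B c) \<longleftrightarrow>
    carry_in (merge_halves (block_sum Y u (nv 2)) (2 ^ nv 2)) (2 ^ nv 2) (nv B)"
  using assms by (simp add: CarryF_def carry_in_def merge_halves_block_sum_less)

(* Counting over the single value 0 turns CarryF into the 0/1 carry term. *)

definition DigitF :: "nat \<Rightarrow> nat \<Rightarrow> nat \<Rightarrow> aform" where
  "DigitF B d c = ExBelow c (Plus (NVar 1) (NVar 1)) (Conj (MergeF B c (c + 1))
     (Conj (LessF (NVar d) (NVar 1))
       (DisjF (EqF (Plus (NVar c) (Count [(c + 2, One)] (CarryF B (c + 3)))) (NVar d))
              (EqF (Plus (NVar c) (Count [(c + 2, One)] (CarryF B (c + 3))))
                   (Plus (NVar d) (NVar 1))))))"

lemma holds_DigitF [simp]: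
  assumes "B < c" "d < c" "2 < c" "nv 1 = 2 ^ nv 2" "u < nv 1"
  shows "holds nv Y u (DigitF B d c) \<longleftrightarrow>
    nv d = lookahead_digit (block_sum Y u (nv 2)) (2 ^ nv 2) (nv B)"
proof -
  let ?W = "2 ^ nv 2" and ?m = "merge_halves (block_sum Y u (nv 2)) (2 ^ nv 2)"
  let ?x = "?m (nv B) + of_bool (carry_in ?m ?W (nv B))"
  have "?x < ?W + ?W"
    using merge_halves_less[of "block_sum Y u (nv 2)" ?W "nv B"] block_sum_less assms by fastforce
  moreover have "holds nv Y u (DigitF B d c) \<longleftrightarrow> nv d < ?W \<and> (?x = nv d \<or> ?x = nv d + ?W)"
    using assms by (simp add: DigitF_def merge_halves_block_sum_less)
  ultimately show ?thesis
    unfolding lookahead_digit_def by (simp only: eq_mod_iff_below_double)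
qed

definition SumBitF :: aform where
  "SumBitF = ExBelow 3 (Plus (NVar 0) One) (ExBelow 4 (NVar 2)
     (Conj (EqF (NVar 0) (Plus (Times (NVar 3) (NVar 2)) (NVar 4)))
       (ExBelow 5 (NVar 1) (Conj (DigitF 3 5 6) (BitF 5 4 6)))))"

lemma holds_SumBitF:
  assumes "nv 1 = 2 ^ nv 2" "u < nv 1" "0 < nv 2"
  shows "holds nv Y u SumBitF \<longleftrightarrow> bit (\<Sum>i<u. YU Y u i) (nv 0)"
proof -
  let ?L = "nv 2" and ?k = "nv 0"
  have "holds nv Y u SumBitF \<longleftrightarrow> (\<exists>B<?k + 1. \<exists>r<?L. ?k = B * ?L + r \<and>
      bit (lookahead_digit (block_sum Y u ?L) (2 ^ ?L) B) r)"
    using assms by (simp add: SumBitF_def lookahead_digit_less)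
  also have "\<dots> \<longleftrightarrow> bit (lookahead_digit (block_sum Y u ?L) (2 ^ ?L) (?k div ?L)) (?k mod ?L)"
    using assms(3) by (subst ex_divmod_iff) (simp_all add: le_imp_less_Suc div_le_dividend)
  also have "\<dots> \<longleftrightarrow> bit (\<Sum>i<u. YU Y u i) ?k"
    using assms by (simp add: bit_sum_YU_iff)
  finally show ?thesis .
qed

definition SumF :: aform where
  "SumF = ExBelow 1 (Plus (Plus UTerm UTerm) One)
     (Conj (LessF UTerm (NVar 1)) (ExBelow 2 (NVar 1) (Conj (ExpF 1 2 3) SumBitF)))"

lemma holds_SumF:
  assumes "0 < u"
  shows "holds nv Y u SumF \<longleftrightarrow> bit (\<Sum>i<u. YU Y u i) (nv 0)"
proof -
  have "holds (nv(1 := 2 ^ L, 2 := L)) Y u SumBitF \<longleftrightarrow> bit (\<Sum>i<u. YU Y u i) (nv 0)"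
    if "u < 2 ^ L" for L
    using holds_SumBitF[of "nv(1 := 2 ^ L, 2 := L)" u Y] that assms by (cases L) auto
  moreover obtain L where "u < 2 ^ L" "2 ^ L \<le> u + u"
    using ex_pow2_above_below_double[OF assms] by blast
  moreover have "L < 2 ^ L"
    by simp
  ultimately show ?thesis
    unfolding SumF_def by (auto simp: less_Suc_eq_le)
qed

theorem lemma3p10:
  shows "\<exists>(sitadd :: aform) (bd :: aterm). \<forall>nv Y u.
           bitval nv Y u sitadd bd = (\<Sum>i < u. YU Y u i)"
proof (intro exI allI)
  fix nv Y u
  show "bitval nv Y u SumF (Plus UTerm UTerm) = (\<Sum>i<u. YU Y u i)"
  proof (cases "u = 0")
    case False
    then have "bitval nv Y u SumF (Plus UTerm UTerm) = (\<Sum>i | i < u + u \<and> bit (\<Sum>i<u. YU Y u i) i. 2 ^ i)"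
      by (simp add: bitval_def yhat_def holds_SumF)
    also have "\<dots> = (\<Sum>i<u. YU Y u i)"
      by (rule sum_set_bits[OF sum_YU_less])
    finally show ?thesis .
  qed (simp add: bitval_def)
qed

end
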